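(* Let $\mathfrak g$ be an admissible non-reductive Lie algebra with $\mathfrak z(\mathfrak g)\subseteq[\mathfrak g,\mathfrak g]$, and let $\mathfrak r$ be the radical of $\mathfrak g$. If $h\in\mathfrak g$ is an Euler element of $\mathfrak g$, then $[h,\mathfrak r]=\{0\}$.
   Context: A finite-dimensional real Lie algebra $\mathfrak g$ is admissible if it contains a pointed (no affine lines), generating (spanning), closed convex subset invariant under $\operatorname{Inn}(\mathfrak g)=\langle e^{\operatorname{ad}\mathfrak g}\rangle$. An Euler element of $\mathfrak g$ is an element $h$ such that $\operatorname{ad}h$ is diagonalizable with spectrum contained in $\{-1,0,1\}$. *)

theory Defs
  imports "HOL-Analysis.Analysis"
begin

definition lie_algebra :: "('a::euclidean_space \<Rightarrow> 'a \<Rightarrow> 'a) \<Rightarrow> bool" where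
  "lie_algebra br \<longleftrightarrow> bilinear br \<and> (\<forall>x. br x x = 0) \<and>
     (\<forall>x y z. br x (br y z) + br y (br z x) + br z (br x y) = 0)"

definition exp_ad :: "('a::euclidean_space \<Rightarrow> 'a \<Rightarrow> 'a) \<Rightarrow> 'a \<Rightarrow> 'a \<Rightarrow> 'a" where
  "exp_ad br x v = (\<Sum>n. (1 / fact n) *\<^sub>R (((br x) ^^ n) v))"

inductive_set Inn :: "('a::euclidean_space \<Rightarrow> 'a \<Rightarrow> 'a) \<Rightarrow> ('a \<Rightarrow> 'a) set"
  for br where
  Inn_id: "id \<in> Inn br"
| Inn_gen: "g \<in> Inn br \<Longrightarrow> exp_ad br x \<circ> g \<in> Inn br"
| Inn_inv: "g \<in> Inn br \<Longrightarrow> inv (exp_ad br x) \<circ> g \<in> Inn br"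

definition pointed :: "'a::real_vector set \<Rightarrow> bool" where
  "pointed C \<longleftrightarrow> \<not> (\<exists>x v. v \<noteq> 0 \<and> (\<forall>t::real. x + t *\<^sub>R v \<in> C))"

definition admissible :: "('a::euclidean_space \<Rightarrow> 'a \<Rightarrow> 'a) \<Rightarrow> bool" where
  "admissible br \<longleftrightarrow> (\<exists>C. pointed C \<and> span C = UNIV \<and> closed C \<and> convex C \<and>
      (\<forall>g\<in>Inn br. g ` C \<subseteq> C))"

definition lie_ideal :: "('a::euclidean_space \<Rightarrow> 'a \<Rightarrow> 'a) \<Rightarrow> 'a set \<Rightarrow> bool" where
  "lie_ideal br I \<longleftrightarrow> subspace I \<and> (\<forall>x y. y \<in> I \<longrightarrow> br x y \<in> I)"

fun derived_series :: "('a::euclidean_space \<Rightarrow> 'a \<Rightarrow> 'a) \<Rightarrow> 'a set \<Rightarrow> nat \<Rightarrow> 'a set" where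
  "derived_series br I 0 = I"
| "derived_series br I (Suc n) =
     span {br a b | a b. a \<in> derived_series br I n \<and> b \<in> derived_series br I n}"

definition solvable :: "('a::euclidean_space \<Rightarrow> 'a \<Rightarrow> 'a) \<Rightarrow> 'a set \<Rightarrow> bool" where
  "solvable br I \<longleftrightarrow> (\<exists>n. derived_series br I n = {0})"

definition radical :: "('a::euclidean_space \<Rightarrow> 'a \<Rightarrow> 'a) \<Rightarrow> 'a set" where
  "radical br = \<Union> {I. lie_ideal br I \<and> solvable br I}"

definition center :: "('a::euclidean_space \<Rightarrow> 'a \<Rightarrow> 'a) \<Rightarrow> 'a set" where
  "center br = {z. \<forall>x. br z x = 0}"

definition derived_algebra :: "('a::euclidean_space \<Rightarrow> 'a \<Rightarrow> 'a) \<Rightarrow> 'a set" where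
  "derived_algebra br = span {br x y | x y. True}"

definition reductive :: "('a::euclidean_space \<Rightarrow> 'a \<Rightarrow> 'a) \<Rightarrow> bool" where
  "reductive br \<longleftrightarrow> radical br = center br"

definition diagonalizable :: "('a::euclidean_space \<Rightarrow> 'a) \<Rightarrow> bool" where
  "diagonalizable f \<longleftrightarrow> span {v. \<exists>c::real. f v = c *\<^sub>R v} = UNIV"

definition spectrum_op :: "('a::euclidean_space \<Rightarrow> 'a) \<Rightarrow> real set" where
  "spectrum_op f = {c. \<exists>v. v \<noteq> 0 \<and> f v = c *\<^sub>R v}"

definition euler_element :: "('a::euclidean_space \<Rightarrow> 'a \<Rightarrow> 'a) \<Rightarrow> 'a \<Rightarrow> bool" where
  "euler_element br h \<longleftrightarrow> diagonalizable (br h) \<and> spectrum_op (br h) \<subseteq> {-1, 0, 1}"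

end

theory Submission
  imports Defs
begin

text \<open>Let \<open>D\<close> be an ideal with \<open>[h,[D,D]] = 0\<close> and \<open>x \<in> D\<close> with \<open>[h,x] = x\<close>.
  Since \<open>ad h\<close> has eigenvalues in \<open>{-1,0,1}\<close>, the operator \<open>ad x\<close> raises \<open>ad h\<close>-eigenvalues
  by one, and eigenvalue 2 does not occur; together with \<open>[h,[x,D]] = 0\<close> this gives
  \<open>(ad x)\<^sup>2 = 0\<close>. Then \<open>exp(t ad x) c = c + t[x,c]\<close>, so a pointed invariant cone forces
  \<open>[x,C] = 0\<close>; as \<open>C\<close> spans, \<open>x\<close> is central, hence \<open>x = [h,x] = 0\<close>. The same holds for
  the eigenvalue \<open>-1\<close> (replace \<open>h\<close> by \<open>-h\<close>), so \<open>[h,D] = 0\<close>. Descending the derived series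
  of a solvable ideal from \<open>{0}\<close> yields \<open>[h,r] = 0\<close> on the radical \<open>r\<close>.\<close>

lemma lie_algebra_linear_bracket: "lie_algebra br \<Longrightarrow> linear (br x)"
  unfolding lie_algebra_def bilinear_def by auto

lemma lie_bracket_antisym:
  assumes "lie_algebra br"
  shows "br x y = - br y x"
proof -
  have b: "bilinear br" and alt: "\<And>u. br u u = 0"
    using assms by (auto simp: lie_algebra_def)
  have "0 = br (x + y) (x + y)" using alt by simp
  also have "\<dots> = br x y + br y x"
    unfolding bilinear_ladd[OF b] bilinear_radd[OF b] by (simp add: alt)
  finally have "br x y + br y x = 0" by (rule sym)
  then show ?thesis by (simp add: eq_neg_iff_add_eq_0)
qed

lemma lie_bracket_derivation:
  assumes "lie_algebra br"
  shows "br h (br a b) = br (br h a) b + br a (br h b)"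
proof -
  have "br h (br a b) + br a (br b h) + br b (br h a) = 0"
    using assms by (simp add: lie_algebra_def)
  moreover have "br a (br b h) = - br a (br h b)"
    using lie_bracket_antisym[OF assms, of b h]
    by (simp add: linear_neg[OF lie_algebra_linear_bracket[OF assms]])
  moreover have "br b (br h a) = - br (br h a) b"
    using lie_bracket_antisym[OF assms] by blast
  ultimately show ?thesis by (simp add: algebra_simps eq_neg_iff_add_eq_0)
qed

lemma lie_ideal_derived_series:
  assumes la: "lie_algebra br" and I: "lie_ideal br I"
  shows "lie_ideal br (derived_series br I k)"
proof (induction k)
  case 0
  then show ?case using I by simp
next
  case (Suc k)
  let ?D = "derived_series br I k"
  let ?S = "{br a b | a b. a \<in> ?D \<and> b \<in> ?D}"
  have closed: "\<And>z y. y \<in> ?D \<Longrightarrow> br z y \<in> ?D"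
    using Suc unfolding lie_ideal_def by blast
  have "br z ` ?S \<subseteq> span ?S" for z
  proof
    fix w assume "w \<in> br z ` ?S"
    then obtain a b where ab: "a \<in> ?D" "b \<in> ?D" and w: "w = br z (br a b)" by blast
    have "br (br z a) b \<in> ?S" "br a (br z b) \<in> ?S" using ab closed by blast+
    then show "w \<in> span ?S"
      unfolding w by (subst lie_bracket_derivation[OF la]) (intro span_add span_base)
  qed
  then have "br z ` span ?S \<subseteq> span ?S" for z
    unfolding span_linear_image[OF lie_algebra_linear_bracket[OF la], symmetric]
    by (intro span_minimal) (auto simp: subspace_span)
  then show ?case
    unfolding lie_ideal_def derived_series.simps by (auto simp: subspace_span)
qed

lemma diagonalizable_spectrum_tripotent:
  fixes f :: "'a::euclidean_space \<Rightarrow> 'a"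
  assumes lin: "linear f" and diag: "diagonalizable f" and spec: "spectrum_op f \<subseteq> {-1, 0, 1}"
  shows "f (f (f v)) = f v"
proof -
  have "linear (f \<circ> f \<circ> f)" using lin by (intro linear_compose)
  then have lin3: "linear (\<lambda>v. f (f (f v)) - f v)"
    using linear_compose_sub[OF _ lin] by (simp add: o_def)
  have "f (f (f u)) - f u = 0" if eigen: "u \<in> {v. \<exists>c::real. f v = c *\<^sub>R v}" for u
  proof -
    obtain c where c: "f u = c *\<^sub>R u" using eigen by blast
    show ?thesis
    proof (cases "u = 0")
      case True
      then show ?thesis by (simp add: linear_0[OF lin])
    next
      case False
      then have "c \<in> {-1, 0, 1}" using c spec unfolding spectrum_op_def by blast
      then have "c * c * c = c" by auto
      then show ?thesis using c by (simp add: linear_scale[OF lin])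
    qed
  qed
  then have "f (f (f v)) - f v = 0"
    using linear_eq_0_on_span[OF lin3] diag unfolding diagonalizable_def by blast
  then show ?thesis by simp
qed

lemma tripotent_no_eigenvalue_two:
  assumes lin: "linear f" and trip: "\<And>v. f (f (f v)) = f v" and eig: "f v = 2 *\<^sub>R v"
  shows "v = 0"
proof -
  have "f (f (f v)) = 8 *\<^sub>R v" using eig by (simp add: linear_scale[OF lin])
  then have "(8 - 2 :: real) *\<^sub>R v = 0" using trip[of v] eig by (simp add: scaleR_left_diff_distrib)
  then show ?thesis by simp
qed

lemma tripotent_eigen_decomposition:
  assumes lin: "linear f" and trip: "\<And>v. f (f (f v)) = f v"
    and S: "subspace S" "\<And>v. v \<in> S \<Longrightarrow> f v \<in> S" and v: "v \<in> S"
  obtains v1 v0 vm where "v = v1 + v0 + vm" "f v1 = v1" "f v0 = 0" "f vm = - vm"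
    "f v = v1 - vm" "v1 \<in> S" "vm \<in> S"
proof
  define v1 where "v1 = (1/2) *\<^sub>R (f (f v) + f v)"
  define vm where "vm = (1/2) *\<^sub>R (f (f v) - f v)"
  have "v1 + vm = f (f v)" "v1 - vm = f v"
    unfolding v1_def vm_def by (simp_all flip: scaleR_add_right scaleR_diff_right add: scaleR_2)
  then show "v = v1 + (v - f (f v)) + vm" "f v = v1 - vm" by (simp_all add: algebra_simps)
  show "f v1 = v1" unfolding v1_def by (simp add: linear_scale[OF lin] linear_add[OF lin] trip add.commute)
  show "f (v - f (f v)) = 0" by (simp add: linear_diff[OF lin] trip)
  show "f vm = - vm" unfolding vm_def by (simp add: linear_scale[OF lin] linear_diff[OF lin] trip algebra_simps)
  show "v1 \<in> S" "vm \<in> S"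
    unfolding v1_def vm_def using S v by (intro subspace_scale subspace_add subspace_diff; simp)+
qed

lemma exp_ad_square_zero:
  assumes la: "lie_algebra br" and sq: "\<And>c. br x (br x c) = 0"
  shows "exp_ad br x c = c + br x c"
proof -
  let ?g = "\<lambda>n. (1 / fact n) *\<^sub>R ((br x ^^ n) c)"
  have "?g n = 0" if "n \<notin> {..<2}" for n
  proof -
    have "n = Suc (Suc (n - 2))" using that by auto
    then have "(br x ^^ n) c = br x (br x ((br x ^^ (n - 2)) c))"
      by (metis comp_apply funpow.simps(2))
    then show ?thesis by (simp add: sq)
  qed
  then have "(\<Sum>n. ?g n) = sum ?g {..<2}" by (intro suminf_finite) auto
  also have "\<dots> = c + br x c" by (simp add: numeral_2_eq_2)
  finally show ?thesis unfolding exp_ad_def .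
qed

lemma admissible_square_zero_ad_central:
  assumes la: "lie_algebra br" and adm: "admissible br" and sq: "\<And>c. br x (br x c) = 0"
  shows "br x y = 0"
proof -
  obtain C where pointed: "pointed C" and spans: "span C = UNIV" and inv: "\<forall>g\<in>Inn br. g ` C \<subseteq> C"
    using adm unfolding admissible_def by blast
  have b: "bilinear br" using la by (simp add: lie_algebra_def)
  have exp_tx: "exp_ad br (t *\<^sub>R x) c = c + t *\<^sub>R br x c" for t c
    using exp_ad_square_zero[OF la, of "t *\<^sub>R x"] sq
    by (simp add: bilinear_lmul[OF b] bilinear_rmul[OF b])
  have "br x c = 0" if "c \<in> C" for c
  proof (rule ccontr)
    assume "br x c \<noteq> 0"
    moreover have "exp_ad br (t *\<^sub>R x) \<in> Inn br" for t
      using Inn.Inn_gen[OF Inn.Inn_id] by simp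
    then have "\<forall>t. c + t *\<^sub>R br x c \<in> C" using inv that exp_tx by (metis image_subset_iff)
    ultimately show False using pointed unfolding pointed_def by blast
  qed
  then show ?thesis
    using linear_eq_0_on_span[OF lie_algebra_linear_bracket[OF la, of x], of C y] spans by blast
qed

context
  fixes br :: "'a::euclidean_space \<Rightarrow> 'a \<Rightarrow> 'a" and h :: 'a and D :: "'a set"
  assumes la: "lie_algebra br" and adm: "admissible br"
    and trip: "\<And>v. br h (br h (br h v)) = br h v"
    and D: "lie_ideal br D"
    and kills_commutators: "\<And>a b. a \<in> D \<Longrightarrow> b \<in> D \<Longrightarrow> br h (br a b) = 0"
begin

lemma ad_square_zero_of_eigenvector:
  assumes x: "x \<in> D" and hx: "br h x = x"
  shows "br x (br x c) = 0"
proof -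
  have lin: "\<And>u. linear (br u)" using la by (rule lie_algebra_linear_bracket)
  note der = lie_bracket_derivation[OF la, of h]
  have no_two: "v = 0" if "br h v = 2 *\<^sub>R v" for v
    using tripotent_no_eigenvalue_two[OF lin trip that] .
  obtain c1 c0 cm where c: "c = c1 + c0 + cm"
    and hc: "br h c1 = c1" "br h c0 = 0" "br h cm = - cm"
    using tripotent_eigen_decomposition[OF lin trip subspace_UNIV] by blast
  have "br x c1 = 0" by (rule no_two) (simp add: der hx hc scaleR_2)
  moreover have "br h (br x c0) = br x c0" by (simp add: der hx hc linear_0[OF lin])
  then have "br x (br x c0) = 0" by (intro no_two) (simp add: der hx scaleR_2)
  moreover have "br x (br x cm) = 0"
  proof -
    have "br h (br x cm) = 0" by (simp add: der hx hc linear_neg[OF lin])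
    moreover have "br cm x \<in> D" using D x unfolding lie_ideal_def by blast
    then have "br x cm \<in> D"
      using D lie_bracket_antisym[OF la, of x cm] unfolding lie_ideal_def by (simp add: subspace_neg)
    ultimately show ?thesis
      using kills_commutators[OF x] der[of x "br x cm"] by (simp add: hx linear_0[OF lin])
  qed
  ultimately show ?thesis by (simp add: c linear_add[OF lin] linear_0[OF lin])
qed

lemma eigenvector_in_ideal_zero:
  assumes x: "x \<in> D" and hx: "br h x = x"
  shows "x = 0"
proof -
  have "br x h = 0"
    by (rule admissible_square_zero_ad_central[OF la adm ad_square_zero_of_eigenvector[OF x hx]])
  then show ?thesis using hx lie_bracket_antisym[OF la, of h x] by simp
qed

end

lemma ad_vanishes_on_ideal_if_vanishes_on_commutators:
  assumes la: "lie_algebra br" and adm: "admissible br"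
    and trip: "\<And>v. br h (br h (br h v)) = br h v"
    and D: "lie_ideal br D"
    and kills_commutators: "\<And>a b. a \<in> D \<Longrightarrow> b \<in> D \<Longrightarrow> br h (br a b) = 0"
    and y: "y \<in> D"
  shows "br h y = 0"
proof -
  have b: "bilinear br" using la by (simp add: lie_algebra_def)
  have lin: "\<And>u. linear (br u)" using la by (rule lie_algebra_linear_bracket)
  obtain y1 y0 ym where hy: "br h y1 = y1" "br h ym = - ym" "br h y = y1 - ym"
    and in_D: "y1 \<in> D" "ym \<in> D"
    using tripotent_eigen_decomposition[OF lin trip _ _ y] D unfolding lie_ideal_def by metis
  have "y1 = 0" using eigenvector_in_ideal_zero[OF la adm trip D kills_commutators in_D(1) hy(1)] .
  moreover have "ym = 0"
  proof (rule eigenvector_in_ideal_zero[OF la adm _ D _ in_D(2)])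
    show "br (-h) (br (-h) (br (-h) v)) = br (-h) v" for v
      using trip by (simp add: bilinear_lneg[OF b] linear_neg[OF lin])
    show "br (-h) (br a c) = 0" if "a \<in> D" "c \<in> D" for a c
      using kills_commutators[OF that] by (simp add: bilinear_lneg[OF b])
    show "br (-h) ym = ym" using hy(2) by (simp add: bilinear_lneg[OF b])
  qed
  ultimately show ?thesis using hy(3) by simp
qed

lemma ad_vanishes_on_solvable_ideal:
  assumes la: "lie_algebra br" and adm: "admissible br"
    and trip: "\<And>v. br h (br h (br h v)) = br h v"
    and I: "lie_ideal br I" "solvable br I" and y: "y \<in> I"
  shows "br h y = 0"
proof -
  obtain n where n: "derived_series br I n = {0}" using I(2) unfolding solvable_def by blast
  have "\<forall>y \<in> derived_series br I k. br h y = 0" if "k \<le> n" for k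
    using that
  proof (induction k rule: inc_induct)
    case base
    then show ?case using n by (simp add: linear_0[OF lie_algebra_linear_bracket[OF la]])
  next
    case (step k)
    have "br h (br a b) = 0" if "a \<in> derived_series br I k" "b \<in> derived_series br I k" for a b
      using step.IH that by (auto intro: span_base)
    then show ?case
      using ad_vanishes_on_ideal_if_vanishes_on_commutators[OF la adm trip lie_ideal_derived_series[OF la I(1)]]
      by blast
  qed
  from this[of 0] show ?thesis using y by simp
qed

theorem proposition4p12:
  fixes br :: "'a::euclidean_space \<Rightarrow> 'a \<Rightarrow> 'a" and h :: 'a
  assumes "lie_algebra br"
    and "admissible br"
    and "\<not> reductive br"
    and "center br \<subseteq> derived_algebra br"
    and "euler_element br h"
  shows "\<forall>r\<in>radical br. br h r = 0"
proof
  fix r assume "r \<in> radical br"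
  then obtain I where "lie_ideal br I" "solvable br I" "r \<in> I"
    unfolding radical_def by blast
  moreover have "br h (br h (br h v)) = br h v" for v
    using assms(5) diagonalizable_spectrum_tripotent[OF lie_algebra_linear_bracket[OF assms(1)]]
    unfolding euler_element_def by blast
  ultimately show "br h r = 0"
    using ad_vanishes_on_solvable_ideal[OF assms(1,2)] by blast
qed

end
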